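(* For every $T\ge0$ and $\vec\pi\in D$, the map $x\mapsto\hat u(x,T,\vec\pi)$ is convex on $[0,\infty)$.
   Context: Let $M$ be a continuous-time Markov chain on $E=\{1,\dots,m\}$ with generator $Q$. Let $N^{(1)},\dots,N^{(m)}$ be independent compound Poisson processes, independent of $M$, with intensities $\lambda_i>0$ and jump-size distributions $\nu_i$; the observed order flow is $N_t=\int_0^t\sum_i1_{\{M_s=i\}}dN^{(i)}_s$ with arrival times $\sigma_1<\sigma_2<\cdots$, and $\mathcal F^N$ is its natural filtration. Let $D=\{\vec\pi\in[0,1]^m:\sum_i\pi_i=1\}$ and $\mathbb P^{\vec\pi}=\sum_i\pi_i\mathbb P(\cdot\mid M_0=i)$. Let $F:[0,\infty)\to[0,\infty)$ be strictly increasing and strictly convex. For $x\ge0$, $\mathcal A^c_x$ is the set of $\mathcal F^N$-adapted, real-valued, nonnegative, non-increasing processes $\xi$ with $\xi_0=x$ whose values change only at arrival times of $N$, and $\hat u(x,T,\vec\pi)=\inf_{\xi\in\mathcal A^c_x}\mathbb E^{\vec\pi}[\sum_{i:\sigma_i\le T}F(\xi_{\sigma_i-}-\xi_{\sigma_i})+F(\xi_T)]$. *)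

theory Defs
  imports "HOL-Probability.Probability"
begin

definition strictly_convex_on :: "real set \<Rightarrow> (real \<Rightarrow> real) \<Rightarrow> bool" where
  "strictly_convex_on S f \<longleftrightarrow>
     (\<forall>x\<in>S. \<forall>y\<in>S. \<forall>a::real. x \<noteq> y \<longrightarrow> 0 < a \<longrightarrow> a < 1 \<longrightarrow>
        f (a * x + (1 - a) * y) < a * f x + (1 - a) * f y)"

primrec mat_pow :: "('e::finite \<Rightarrow> 'e \<Rightarrow> real) \<Rightarrow> nat \<Rightarrow> 'e \<Rightarrow> 'e \<Rightarrow> real" where
  "mat_pow Q 0 = (\<lambda>i j. if i = j then 1 else 0)"
| "mat_pow Q (Suc k) = (\<lambda>i j. \<Sum>l\<in>UNIV. mat_pow Q k i l * Q l j)"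

definition trans_mat :: "('e::finite \<Rightarrow> 'e \<Rightarrow> real) \<Rightarrow> real \<Rightarrow> 'e \<Rightarrow> 'e \<Rightarrow> real" where
  "trans_mat Q t i j = (\<Sum>k. t ^ k / fact k * mat_pow Q k i j)"

definition is_generator :: "('e::finite \<Rightarrow> 'e \<Rightarrow> real) \<Rightarrow> bool" where
  "is_generator Q \<longleftrightarrow> (\<forall>i j. i \<noteq> j \<longrightarrow> 0 \<le> Q i j) \<and> (\<forall>i. (\<Sum>j\<in>UNIV. Q i j) = 0)"

text \<open>M is a continuous-time Markov chain with generator Q and initial law p0
  (cadlag paths, finite-dimensional distributions given by exp(tQ)).\<close>
definition ctmc :: "'a measure \<Rightarrow> (real \<Rightarrow> 'a \<Rightarrow> 'e::finite) \<Rightarrow> ('e \<Rightarrow> 'e \<Rightarrow> real) \<Rightarrow> ('e \<Rightarrow> real) \<Rightarrow> bool" where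
  "ctmc P M Q p0 \<longleftrightarrow>
     (\<forall>t. M t \<in> measurable P (count_space UNIV)) \<and>
     (\<forall>\<omega> t. 0 \<le> t \<longrightarrow> (\<exists>\<epsilon>>0. \<forall>s\<in>{t..<t+\<epsilon>}. M s \<omega> = M t \<omega>)) \<and>
     (\<forall>\<omega> t. 0 < t \<longrightarrow> (\<exists>\<epsilon>>0. \<exists>i. \<forall>s\<in>{t-\<epsilon><..<t}. M s \<omega> = i)) \<and>
     (\<forall>(n::nat) (t::nat \<Rightarrow> real) (s::nat \<Rightarrow> 'e). 0 \<le> t 0 \<longrightarrow> (\<forall>k<n. t k \<le> t (Suc k)) \<longrightarrow>
        measure P {\<omega>\<in>space P. \<forall>k\<le>n. M (t k) \<omega> = s k} =
        (\<Sum>i\<in>UNIV. p0 i * trans_mat Q (t 0) i (s 0)) *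
        (\<Prod>k<n. trans_mat Q (t (Suc k) - t k) (s k) (s (Suc k))))"

definition compound_poisson :: "'a measure \<Rightarrow> real \<Rightarrow> real measure \<Rightarrow> (real \<Rightarrow> 'a \<Rightarrow> real) \<Rightarrow> bool" where
  "compound_poisson P lam nu X \<longleftrightarrow>
     (\<forall>t. X t \<in> borel_measurable P) \<and>
     (\<exists>(S::nat \<Rightarrow> 'a \<Rightarrow> real) (Y::nat \<Rightarrow> 'a \<Rightarrow> real).
        (\<forall>k. S k \<in> borel_measurable P) \<and> (\<forall>k. Y k \<in> borel_measurable P) \<and>
        (\<forall>\<omega>. S 0 \<omega> = 0) \<and>
        prob_space.indep_vars P (\<lambda>_. borel)
          (\<lambda>k \<omega>. case k of Inl n \<Rightarrow> S (Suc n) \<omega> - S n \<omega> | Inr n \<Rightarrow> Y n \<omega>) UNIV \<and>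
        (\<forall>n. distributed P lborel (\<lambda>\<omega>. S (Suc n) \<omega> - S n \<omega>) (exponential_density lam)) \<and>
        (\<forall>n. distr P borel (Y n) = nu) \<and>
        (AE \<omega> in P. \<forall>t\<ge>0. X t \<omega> = (\<Sum>k\<in>{k. 1 \<le> k \<and> S k \<omega> \<le> t}. Y k \<omega>)))"

definition left_lim :: "(real \<Rightarrow> real) \<Rightarrow> real \<Rightarrow> real" where
  "left_lim f s = Lim (at_left s) f"

definition jump_times :: "(real \<Rightarrow> real) \<Rightarrow> real set" where
  "jump_times f = {s. 0 < s \<and> f s \<noteq> left_lim f s}"

text \<open>N_t = int_0^t sum_i 1{M_s = i} dN^(i)_s (pathwise Stieltjes integral of piecewise constant paths).\<close>
definition observed :: "(real \<Rightarrow> 'a \<Rightarrow> 'e::finite) \<Rightarrow> ('e \<Rightarrow> real \<Rightarrow> 'a \<Rightarrow> real) \<Rightarrow> real \<Rightarrow> 'a \<Rightarrow> real" where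
  "observed M Nc t \<omega> =
     (\<Sum>i\<in>UNIV. \<Sum>s\<in>jump_times (\<lambda>r. Nc i r \<omega>) \<inter> {0<..t}.
        if M s \<omega> = i then Nc i s \<omega> - left_lim (\<lambda>r. Nc i r \<omega>) s else 0)"

definition nat_filt :: "'a measure \<Rightarrow> (real \<Rightarrow> 'a \<Rightarrow> real) \<Rightarrow> real \<Rightarrow> 'a measure" where
  "nat_filt P X t = sigma (space P)
     {X s -` B \<inter> space P | s B. 0 \<le> s \<and> s \<le> t \<and> B \<in> sets borel}"

definition admissible :: "'a measure \<Rightarrow> (real \<Rightarrow> 'a \<Rightarrow> real) \<Rightarrow> real \<Rightarrow> (real \<Rightarrow> 'a \<Rightarrow> real) \<Rightarrow> bool" where
  "admissible P X x \<xi> \<longleftrightarrow>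
     (\<forall>t\<ge>0. \<xi> t \<in> borel_measurable (nat_filt P X t)) \<and>
     (\<forall>\<omega>\<in>space P.
        \<xi> 0 \<omega> = x \<and>
        (\<forall>t\<ge>0. 0 \<le> \<xi> t \<omega>) \<and>
        (\<forall>s t. 0 \<le> s \<longrightarrow> s \<le> t \<longrightarrow> \<xi> t \<omega> \<le> \<xi> s \<omega>) \<and>
        (\<forall>s t. 0 \<le> s \<longrightarrow> s \<le> t \<longrightarrow> {s<..t} \<inter> jump_times (\<lambda>r. X r \<omega>) = {} \<longrightarrow> \<xi> t \<omega> = \<xi> s \<omega>))"

definition exec_cost :: "(real \<Rightarrow> 'a \<Rightarrow> real) \<Rightarrow> (real \<Rightarrow> real) \<Rightarrow> real \<Rightarrow> (real \<Rightarrow> 'a \<Rightarrow> real) \<Rightarrow> 'a \<Rightarrow> real" where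
  "exec_cost X F T \<xi> \<omega> =
     (\<Sum>s\<in>jump_times (\<lambda>r. X r \<omega>) \<inter> {0<..T}. F (left_lim (\<lambda>r. \<xi> r \<omega>) s - \<xi> s \<omega>)) + F (\<xi> T \<omega>)"

definition value_fn :: "'a measure \<Rightarrow> (real \<Rightarrow> 'a \<Rightarrow> real) \<Rightarrow> (real \<Rightarrow> real) \<Rightarrow> real \<Rightarrow> real \<Rightarrow> ennreal" where
  "value_fn P X F T x = (INF \<xi>\<in>{\<xi>. admissible P X x \<xi>}. \<integral>\<^sup>+ \<omega>. ennreal (exec_cost X F T \<xi> \<omega>) \<partial>P)"

end

theory Submission
  imports Defs
begin

(* A convex combination of admissible strategies started from x and y is admissible from the
   combined inventory. Every strategy trades only at the finitely many arrival times of the order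
   flow in [0, T], so its cost is pathwise a finite sum of F over its trade sizes plus F of the
   terminal inventory, and convexity of F makes this cost convex in the strategy. Integrating and
   taking infima gives the claim. The Markov chain and the compound Poisson processes enter only
   through the regularity of the paths (almost surely finitely many jumps on bounded intervals)
   and the measurability of the cost: it is almost surely the limit of sums over dyadic grids,
   hence measurable for the completion of P, on which the nonnegative integral is additive. *)

definition piecewise_const :: "(real \<Rightarrow> real) \<Rightarrow> real set \<Rightarrow> real \<Rightarrow> bool" where
  "piecewise_const f J t \<longleftrightarrow>
     finite J \<and> (\<forall>u v. 0 \<le> u \<longrightarrow> u \<le> v \<longrightarrow> v \<le> t \<longrightarrow> {u<..v} \<inter> J = {} \<longrightarrow> f v = f u)"

lemma piecewise_constD:
  "piecewise_const f J t \<Longrightarrow> 0 \<le> u \<Longrightarrow> u \<le> v \<Longrightarrow> v \<le> t \<Longrightarrow> {u<..v} \<inter> J = {} \<Longrightarrow> f v = f u"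
  unfolding piecewise_const_def by blast

lemma piecewise_const_finite: "piecewise_const f J t \<Longrightarrow> finite J"
  unfolding piecewise_const_def by blast

lemma left_lim_eqI:
  assumes "w < s" "\<And>r. w < r \<Longrightarrow> r < s \<Longrightarrow> f r = c"
  shows "left_lim f s = c"
proof -
  have "eventually (\<lambda>r. f r = c) (at_left s)"
    by (rule eventually_mono[OF eventually_at_left_real[OF assms(1)]]) (use assms(2) in auto)
  then have "(f \<longlongrightarrow> c) (at_left s)"
    by (rule tendsto_eventually)
  then show ?thesis
    unfolding left_lim_def by (intro tendsto_Lim) (auto simp: trivial_limit_at_left_real)
qed

lemma piecewise_const_left:
  assumes "piecewise_const f J t" "0 < s" "s \<le> t"
  obtains w where "0 \<le> w" "w < s" "{w<..<s} \<inter> J = {}"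
    "\<And>r. w \<le> r \<Longrightarrow> r < s \<Longrightarrow> f r = f w" "left_lim f s = f w"
proof -
  define K where "K = insert 0 {x\<in>J. x < s}"
  have K: "finite K" using piecewise_const_finite[OF assms(1)] by (simp add: K_def)
  define w where "w = Max K"
  have w0: "0 \<le> w" unfolding w_def using K by (intro Max_ge) (auto simp: K_def)
  have ws: "w < s" unfolding w_def using K assms(2) by (subst Max_less_iff) (auto simp: K_def)
  have free: "{w<..<s} \<inter> J = {}"
  proof (rule ccontr)
    assume "{w<..<s} \<inter> J \<noteq> {}"
    then obtain x where x: "x \<in> J" "w < x" "x < s" by auto
    then have "x \<le> w" unfolding w_def using K by (intro Max_ge) (auto simp: K_def)
    with x show False by simp
  qed
  have const: "f r = f w" if "w \<le> r" "r < s" for r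
  proof (rule piecewise_constD[OF assms(1) w0 that(1)])
    show "r \<le> t" using that assms(3) by simp
    have "{w<..r} \<subseteq> {w<..<s}" using that by auto
    with free show "{w<..r} \<inter> J = {}" by blast
  qed
  have "left_lim f s = f w" by (rule left_lim_eqI[OF ws const]) auto
  with that w0 ws free const show ?thesis by blast
qed

lemma piecewise_const_right:
  assumes "piecewise_const f J t" "0 \<le> s"
  obtains e where "0 < e" "\<And>b. s \<le> b \<Longrightarrow> b \<le> t \<Longrightarrow> b < s + e \<Longrightarrow> f b = f s"
proof -
  define K where "K = insert 1 ((\<lambda>x. x - s) ` {x\<in>J. s < x})"
  have K: "finite K" using piecewise_const_finite[OF assms(1)] by (simp add: K_def)
  define e where "e = Min K"
  have e0: "0 < e" unfolding e_def using K by (subst Min_gr_iff) (auto simp: K_def)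
  have "f b = f s" if "s \<le> b" "b \<le> t" "b < s + e" for b
  proof (rule piecewise_constD[OF assms(1) assms(2) that(1,2)])
    show "{s<..b} \<inter> J = {}"
    proof (rule ccontr)
      assume "{s<..b} \<inter> J \<noteq> {}"
      then obtain x where x: "x \<in> J" "s < x" "x \<le> b" by auto
      then have "e \<le> x - s" unfolding e_def using K by (intro Min_le) (auto simp: K_def)
      with x that show False by simp
    qed
  qed
  with e0 that show ?thesis by blast
qed

lemma piecewise_const_local:
  assumes "piecewise_const f J t" "0 < s" "s \<le> t"
  obtains \<delta> where "0 < \<delta>" "\<And>a. s - \<delta> < a \<Longrightarrow> a < s \<Longrightarrow> f a = left_lim f s"
    "\<And>b. s \<le> b \<Longrightarrow> b < s + \<delta> \<Longrightarrow> b \<le> t \<Longrightarrow> f b = f s"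
proof -
  obtain w where w: "w < s" "\<And>r. w \<le> r \<Longrightarrow> r < s \<Longrightarrow> f r = f w" "left_lim f s = f w"
    using piecewise_const_left[OF assms] by metis
  obtain e where e: "0 < e" "\<And>b. s \<le> b \<Longrightarrow> b \<le> t \<Longrightarrow> b < s + e \<Longrightarrow> f b = f s"
    using piecewise_const_right[OF assms(1)] assms(2) by (metis less_imp_le)
  show ?thesis
  proof (rule that[of "min (s - w) e"])
    show "0 < min (s - w) e" using w(1) e(1) by simp
    show "f a = left_lim f s" if "s - min (s - w) e < a" "a < s" for a
      using w(2)[of a] w(3) that by simp
    show "f b = f s" if "s \<le> b" "b < s + min (s - w) e" "b \<le> t" for b
      using e(2)[of b] that by simp
  qed
qed

lemma jump_times_subset_piecewise_const:
  assumes "piecewise_const f J t"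
  shows "jump_times f \<inter> {0<..t} \<subseteq> J"
proof
  fix s assume s: "s \<in> jump_times f \<inter> {0<..t}"
  then have s0: "0 < s" "s \<le> t" by auto
  obtain w where w: "0 \<le> w" "w < s" "{w<..<s} \<inter> J = {}" "left_lim f s = f w"
    by (rule piecewise_const_left[OF assms s0])
  show "s \<in> J"
  proof (rule ccontr)
    assume "s \<notin> J"
    with w(3) have "{w<..s} \<inter> J = {}" by (auto simp: disjoint_iff) (metis order_le_less)
    then have "f s = f w" using piecewise_constD[OF assms w(1) _ s0(2)] w(2) by simp
    with w s show False by (simp add: jump_times_def)
  qed
qed

text \<open>Points of J at which the path does not jump can be dropped: between jump times the path is
  locally constant, hence constant on each interval by connectedness.\<close>

lemma piecewise_const_jump_times:
  assumes pc: "piecewise_const f J t"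
  shows "piecewise_const f (jump_times f \<inter> {0<..t}) t"
  unfolding piecewise_const_def
proof (intro conjI allI impI)
  show "finite (jump_times f \<inter> {0<..t})"
    using jump_times_subset_piecewise_const[OF pc] piecewise_const_finite[OF pc] by (rule finite_subset)
  fix u v assume uv: "0 \<le> u" "u \<le> v" "v \<le> t" and no_jump: "{u<..v} \<inter> (jump_times f \<inter> {0<..t}) = {}"
  have "\<forall>r\<in>{u..v}. eventually (\<lambda>b. f r = f b) (at r within {u..v})"
  proof
    fix r assume r: "r \<in> {u..v}"
    show "eventually (\<lambda>b. f r = f b) (at r within {u..v})"
    proof (cases "r = u")
      case True
      obtain e where e: "0 < e" "\<And>b. r \<le> b \<Longrightarrow> b \<le> t \<Longrightarrow> b < r + e \<Longrightarrow> f b = f r"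
        using piecewise_const_right[OF pc] r uv by (metis atLeastAtMost_iff order_trans)
      show ?thesis unfolding eventually_at
      proof (intro exI[of _ e] conjI ballI impI)
        fix b assume b: "b \<in> {u..v}" "b \<noteq> r \<and> dist b r < e"
        then have "r \<le> b" "b \<le> t" "b < r + e" using True uv by (auto simp: dist_real_def)
        then show "f r = f b" using e(2)[of b] by simp
      qed (rule e(1))
    next
      case False
      with r uv have r0: "0 < r" "r \<le> t" by auto
      have "r \<in> {u<..v} \<inter> {0<..t}" using r r0 False by auto
      with no_jump have "r \<notin> jump_times f" by blast
      with r0 have cont: "left_lim f r = f r" by (simp add: jump_times_def)
      obtain \<delta> where \<delta>: "0 < \<delta>" "\<And>a. r - \<delta> < a \<Longrightarrow> a < r \<Longrightarrow> f a = left_lim f r"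
        "\<And>b. r \<le> b \<Longrightarrow> b < r + \<delta> \<Longrightarrow> b \<le> t \<Longrightarrow> f b = f r"
        using piecewise_const_local[OF pc r0] by blast
      show ?thesis unfolding eventually_at
      proof (intro exI[of _ \<delta>] conjI ballI impI)
        fix b assume b: "b \<in> {u..v}" "b \<noteq> r \<and> dist b r < \<delta>"
        then have near: "r - \<delta> < b" "b < r + \<delta>" by (auto simp: dist_real_def)
        show "f r = f b"
        proof (cases "r \<le> b")
          case True
          then have "b \<le> t" using b uv by simp
          with True near show ?thesis using \<delta>(3)[of b] by simp
        next
          case False
          with near have "f b = left_lim f r" using \<delta>(2)[of b] by simp
          with cont show ?thesis by simp
        qed
      qed (rule \<delta>(1))
    qed
  qed
  moreover have "v \<in> {u..v}" "u \<in> {u..v}" using uv by auto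
  ultimately show "f v = f u"
    using connected_local_const[of "{u..v}" v u f] by simp
qed

lemma dyadic_cell_containing:
  fixes s t :: real
  assumes "0 < s" "s \<le> t"
  obtains k where "k < 2^n" "real k * t / 2^n < s" "s \<le> real (Suc k) * t / 2^n"
proof -
  have t0: "0 < t" using assms by simp
  define c where "c = \<lceil>s * 2^n / t\<rceil>"
  have c: "real_of_int c - 1 < s * 2^n / t" "s * 2^n / t \<le> real_of_int c"
    unfolding c_def by linarith+
  have "0 < s * 2^n / t" "s * 2^n / t \<le> 2^n" using assms t0 by (simp_all add: field_simps)
  then have c1: "1 \<le> c" and cn: "c \<le> 2^n" unfolding c_def by (simp_all add: ceiling_le_iff)
  define k where "k = nat c - 1"
  have k: "real (Suc k) = real_of_int c" "real k = real_of_int c - 1" using c1 by (simp_all add: k_def)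
  have "nat c \<le> 2^n" using cn by (simp add: nat_le_iff)
  then have "k < 2^n" unfolding k_def using c1 by (simp add: less_eq_Suc_le)
  moreover have "real k * t / 2^n < s" "s \<le> real (Suc k) * t / 2^n"
    using c t0 unfolding k by (simp_all add: field_simps)
  ultimately show ?thesis by (rule that)
qed

lemma sum_dyadic_cells:
  fixes J :: "real set" and t :: real
  assumes "finite J" "J \<subseteq> {0<..t}" "0 \<le> t"
  shows "(\<Sum>s\<in>J. V s) = (\<Sum>k<2^n. \<Sum>s\<in>J \<inter> {real k * t / 2^n<..real (Suc k) * t / 2^n}. V s)"
proof -
  define I where "I k = {real k * t / 2^n<..real (Suc k) * t / 2^n}" for k
  have cover: "J = (\<Union>k<2^n. J \<inter> I k)"
  proof
    show "J \<subseteq> (\<Union>k<2^n. J \<inter> I k)"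
    proof
      fix s assume s: "s \<in> J"
      with assms(2) have "0 < s" "s \<le> t" by auto
      then obtain k where "k < 2^n" "s \<in> I k"
        unfolding I_def by (rule dyadic_cell_containing) auto
      with s show "s \<in> (\<Union>k<2^n. J \<inter> I k)" by blast
    qed
  qed auto
  have apart: "I k \<inter> I k' = {}" if "k < k'" for k k'
  proof -
    have "real (Suc k) * t / 2^n \<le> real k' * t / 2^n"
      using that assms(3) by (intro divide_right_mono mult_right_mono) auto
    then show ?thesis by (auto simp: I_def)
  qed
  have "disjoint_family_on (\<lambda>k. J \<inter> I k) {..<2^n}"
    unfolding disjoint_family_on_def
  proof (intro ballI impI)
    fix k k' :: nat assume "k \<noteq> k'"
    then consider "k < k'" | "k' < k" by linarith
    then show "J \<inter> I k \<inter> (J \<inter> I k') = {}" by cases (use apart in auto)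
  qed
  then have "(\<Sum>s\<in>(\<Union>k<2^n. J \<inter> I k). V s) = (\<Sum>k<2^n. \<Sum>s\<in>J \<inter> I k. V s)"
    using assms(1) by (intro sum.UNION_disjoint_family) auto
  with cover have "(\<Sum>s\<in>J. V s) = (\<Sum>k<2^n. \<Sum>s\<in>J \<inter> I k. V s)"
    by (metis (no_types))
  then show ?thesis unfolding I_def .
qed

lemma finite_min_gap:
  fixes J :: "real set"
  assumes "finite J" "\<And>s. s \<in> J \<Longrightarrow> 0 < d s"
  obtains \<delta> where "0 < \<delta>" "\<And>s. s \<in> J \<Longrightarrow> \<delta> \<le> d s"
    "\<And>x y. x \<in> J \<Longrightarrow> y \<in> J \<Longrightarrow> x \<noteq> y \<Longrightarrow> \<delta> \<le> \<bar>x - y\<bar>"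
proof -
  define D where "D = insert 1 (d ` J \<union> (\<lambda>(x, y). \<bar>x - y\<bar>) ` {(x, y)\<in>J \<times> J. x \<noteq> y})"
  have D: "finite D" unfolding D_def using assms(1)
    by (intro finite_insert[THEN iffD2] finite_UnI finite_imageI) (auto intro: finite_subset[of _ "J \<times> J"])
  show ?thesis
  proof (rule that[of "Min D"])
    show "0 < Min D" using D assms(2) by (subst Min_gr_iff) (auto simp: D_def)
    show "Min D \<le> d s" if "s \<in> J" for s using D that by (intro Min_le) (auto simp: D_def)
    show "Min D \<le> \<bar>x - y\<bar>" if "x \<in> J" "y \<in> J" "x \<noteq> y" for x y
      using D that by (intro Min_le) (auto simp: D_def)
  qed
qed

lemma piecewise_const_cell_increment:
  assumes pc: "piecewise_const f J t" and J: "J = jump_times f \<inter> {0<..t}"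
    and ab: "0 \<le> a" "a \<le> b" "b \<le> t"
    and single: "\<And>x y. x \<in> J \<inter> {a<..b} \<Longrightarrow> y \<in> J \<inter> {a<..b} \<Longrightarrow> x = y"
    and G: "\<And>s. s \<in> J \<inter> {a<..b} \<Longrightarrow> G a b = V s"
  shows "(if f b \<noteq> f a then G a b else 0) = (\<Sum>s\<in>J \<inter> {a<..b}. V s)"
proof (cases "J \<inter> {a<..b} = {}")
  case True
  then have "{a<..b} \<inter> J = {}" by blast
  then have "f b = f a" by (rule piecewise_constD[OF pc ab])
  with True show ?thesis by simp
next
  case False
  then obtain s where s: "s \<in> J \<inter> {a<..b}" by blast
  have cell: "J \<inter> {a<..b} = {s}"
  proof
    show "J \<inter> {a<..b} \<subseteq> {s}" using single[OF _ s] by blast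
  qed (use s in blast)
  have s_ab: "a < s" "s \<le> b" using s by auto
  have "{s<..b} \<inter> J \<subseteq> J \<inter> {a<..b} - {s}" using s_ab by auto
  with cell have "{s<..b} \<inter> J = {}" by blast
  then have "f b = f s" using piecewise_constD[OF pc _ s_ab(2) ab(3)] ab(1) s_ab(1) by linarith
  moreover have "left_lim f s = f a"
  proof (rule left_lim_eqI[OF s_ab(1)])
    fix r assume r: "a < r" "r < s"
    have "{a<..r} \<inter> J \<subseteq> J \<inter> {a<..b} - {s}" using r s_ab by auto
    with cell have "{a<..r} \<inter> J = {}" by blast
    then show "f r = f a" using piecewise_constD[OF pc ab(1), of r] r s_ab(2) ab(3) by linarith
  qed
  moreover have "f s \<noteq> left_lim f s" using s J by (simp add: jump_times_def)
  ultimately have "f b \<noteq> f a" by simp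
  then show ?thesis using G[OF s] cell by simp
qed

text \<open>Along dyadic partitions of [0, t] a piecewise constant path eventually has at most one
  jump per cell, so sums over cells whose endpoints differ become sums over jump times.\<close>

lemma dyadic_increments_eventually:
  assumes pc: "piecewise_const f J t" and J: "J = jump_times f \<inter> {0<..t}" and t0: "0 \<le> t"
    and loc: "\<And>s. s \<in> J \<Longrightarrow> \<exists>\<delta>>0. \<forall>a b. s - \<delta> < a \<longrightarrow> a < s \<longrightarrow> s \<le> b \<longrightarrow> b \<le> t \<longrightarrow>
                 b < s + \<delta> \<longrightarrow> G a b = V s"
  shows "\<forall>\<^sub>F n in sequentially.
    (\<Sum>k<2^n. if f (real (Suc k) * t / 2^n) \<noteq> f (real k * t / 2^n)
               then G (real k * t / 2^n) (real (Suc k) * t / 2^n) else 0) = (\<Sum>s\<in>J. V s)"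
proof -
  have finJ: "finite J" by (rule piecewise_const_finite[OF pc])
  have Jt: "J \<subseteq> {0<..t}" by (simp add: J)
  obtain d where d: "\<And>s. s \<in> J \<Longrightarrow> 0 < d s"
    "\<And>s a b. s \<in> J \<Longrightarrow> s - d s < a \<Longrightarrow> a < s \<Longrightarrow> s \<le> b \<Longrightarrow> b \<le> t \<Longrightarrow> b < s + d s \<Longrightarrow> G a b = V s"
    using loc by metis
  obtain \<delta> where \<delta>: "0 < \<delta>" "\<And>s. s \<in> J \<Longrightarrow> \<delta> \<le> d s"
    "\<And>x y. x \<in> J \<Longrightarrow> y \<in> J \<Longrightarrow> x \<noteq> y \<Longrightarrow> \<delta> \<le> \<bar>x - y\<bar>"
    using finite_min_gap[of J d] finJ d(1) by blast
  obtain N where "t / \<delta> < 2 ^ N" using real_arch_pow[of 2 "t / \<delta>"] by auto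
  then have N: "t / 2 ^ N < \<delta>" using \<delta>(1) by (simp add: field_simps)
  show ?thesis
  proof (rule eventually_sequentiallyI[of N])
    fix n assume "N \<le> n"
    then have "t / 2 ^ n \<le> t / 2 ^ N"
      using t0 by (intro divide_left_mono power_increasing) auto
    with N have mesh: "t / 2 ^ n < \<delta>" by simp
    have cell: "(if f (real (Suc k) * t / 2^n) \<noteq> f (real k * t / 2^n)
                 then G (real k * t / 2^n) (real (Suc k) * t / 2^n) else 0)
               = (\<Sum>s\<in>J \<inter> {real k * t / 2^n<..real (Suc k) * t / 2^n}. V s)" if k: "k < 2^n" for k
    proof (rule piecewise_const_cell_increment[OF pc J])
      define a where "a = real k * t / 2^n"
      define b where "b = real (Suc k) * t / 2^n"
      have width: "b = a + t / 2^n" by (simp add: a_def b_def field_simps)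
      have "real (Suc k) \<le> real (2^n)" using k by (subst of_nat_le_iff) simp
      then have "b \<le> real (2^n) * t / 2^n"
        unfolding b_def using t0 by (intro divide_right_mono mult_right_mono) auto
      then show "0 \<le> a" "a \<le> b" "b \<le> t" using t0 width by (simp_all add: a_def)
      show "x = y" if "x \<in> J \<inter> {a<..b}" "y \<in> J \<inter> {a<..b}" for x y
        using \<delta>(3)[of x y] that width mesh by force
      show "G a b = V s" if s: "s \<in> J \<inter> {a<..b}" for s
        using d(2)[of s a b] \<delta>(2)[of s] s width mesh \<open>b \<le> t\<close> by auto
    qed
    have "(\<Sum>k<2^n. if f (real (Suc k) * t / 2^n) \<noteq> f (real k * t / 2^n)
               then G (real k * t / 2^n) (real (Suc k) * t / 2^n) else 0)
        = (\<Sum>k<2^n. \<Sum>s\<in>J \<inter> {real k * t / 2^n<..real (Suc k) * t / 2^n}. V s)"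
      by (rule sum.cong[OF refl], rule cell) simp
    also have "\<dots> = (\<Sum>s\<in>J. V s)"
      by (rule sum_dyadic_cells[OF finJ Jt t0, symmetric])
    finally show "(\<Sum>k<2^n. if f (real (Suc k) * t / 2^n) \<noteq> f (real k * t / 2^n)
               then G (real k * t / 2^n) (real (Suc k) * t / 2^n) else 0) = (\<Sum>s\<in>J. V s)" .
  qed
qed

lemma borel_measurable_completion_AE_LIMSEQ:
  fixes f :: "nat \<Rightarrow> 'a \<Rightarrow> real"
  assumes "\<And>n. f n \<in> borel_measurable (completion M)"
    and "AE x in M. (\<lambda>n. f n x) \<longlonglongrightarrow> g x"
  shows "g \<in> borel_measurable (completion M)"
proof (rule measurableI)
  fix B :: "real set" assume B: "B \<in> sets borel"
  define L where "L x = lim (\<lambda>n. f n x)" for x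
  have "L \<in> borel_measurable (completion M)"
    unfolding L_def by (rule borel_measurable_lim_metric) (rule assms(1))
  then have L_sets: "L -` B \<inter> space (completion M) \<in> sets (completion M)"
    using B by (rule measurable_sets)
  have "AE x in M. L x = g x"
    using assms(2) by eventually_elim (auto simp: L_def intro: limI)
  then have "AE x in completion M. L x = g x" by (rule AE_completion)
  then have "AE x in completion M.
      x \<in> L -` B \<inter> space (completion M) \<longleftrightarrow> x \<in> g -` B \<inter> space (completion M)"
    by eventually_elim auto
  then show "g -` B \<inter> space (completion M) \<in> sets (completion M)" using L_sets
    by (rule complete_measure.in_sets_AE[OF completion.complete_measure_axioms]) auto
qed simp

lemma strictly_convex_on_imp_convex_on:
  assumes "strictly_convex_on S F" "convex S"
  shows "convex_on S F"
proof (rule convex_onI[OF _ assms(2)])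
  fix t x y :: real assume t: "0 < t" "t < 1" and xy: "x \<in> S" "y \<in> S"
  show "F ((1 - t) *\<^sub>R x + t *\<^sub>R y) \<le> (1 - t) * F x + t * F y"
  proof (cases "x = y")
    case True
    then show ?thesis by (simp add: algebra_simps)
  next
    case False
    have "0 < 1 - t" "1 - t < 1" using t by simp_all
    with assms(1) xy False have "F ((1 - t) * x + (1 - (1 - t)) * y) < (1 - t) * F x + (1 - (1 - t)) * F y"
      unfolding strictly_convex_on_def by blast
    then show ?thesis by simp
  qed
qed

lemma borel_measurable_mono_on_max_0:
  fixes F :: "real \<Rightarrow> real"
  assumes "mono_on {0..} F"
  shows "(\<lambda>x. F (max 0 x)) \<in> borel_measurable borel"
  by (rule borel_measurable_mono) (auto simp: mono_def intro!: mono_onD[OF assms])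

lemma ennreal_add_mult_INF:
  fixes B :: "'x \<Rightarrow> ennreal" and c d :: ennreal
  assumes "S \<noteq> {}" "d < top"
  shows "c + d * (INF x\<in>S. B x) = (INF x\<in>S. c + d * B x)"
proof -
  have cont: "continuous_on UNIV (\<lambda>y::ennreal. c + d * y)"
    by (intro continuous_on_add continuous_on_const ennreal_continuous_on_cmult assms(2) continuous_on_id)
  have "(\<lambda>y. c + d * y) (Inf (B ` S)) = (INF y\<in>B ` S. c + d * y)"
  proof (rule continuous_at_Inf_mono)
    show "mono (\<lambda>y. c + d * y)" by (auto simp: mono_def intro: add_left_mono mult_left_mono)
    have "isCont (\<lambda>y. c + d * y) (Inf (B ` S))"
      using cont continuous_on_eq_continuous_at[of UNIV] by blast
    then show "continuous (at_right (Inf (B ` S))) (\<lambda>y. c + d * y)"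
      by (rule continuous_at_imp_continuous_within)
  qed (use assms in auto)
  then show ?thesis by (simp add: image_comp)
qed

lemma le_add_mult_INF:
  fixes A B :: "'x \<Rightarrow> ennreal" and v c d :: ennreal
  assumes "SA \<noteq> {}" "SB \<noteq> {}" "c < top" "d < top"
    and "\<And>x y. x \<in> SA \<Longrightarrow> y \<in> SB \<Longrightarrow> v \<le> c * A x + d * B y"
  shows "v \<le> c * (INF x\<in>SA. A x) + d * (INF y\<in>SB. B y)"
proof -
  have "v \<le> c * A x + d * (INF y\<in>SB. B y)" if "x \<in> SA" for x
    unfolding ennreal_add_mult_INF[OF assms(2,4)] using assms(5) that by (intro INF_greatest)
  then have "v \<le> (INF x\<in>SA. d * (INF y\<in>SB. B y) + c * A x)"
    by (intro INF_greatest) (simp add: add.commute)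
  also have "\<dots> = d * (INF y\<in>SB. B y) + c * (INF x\<in>SA. A x)"
    by (rule ennreal_add_mult_INF[symmetric, OF assms(1,3)])
  finally show ?thesis by (simp add: add.commute)
qed

definition path_cost :: "(real \<Rightarrow> real) \<Rightarrow> real set \<Rightarrow> real \<Rightarrow> (real \<Rightarrow> real) \<Rightarrow> real" where
  "path_cost F J T g = (\<Sum>s\<in>J. F (left_lim g s - g s)) + F (g T)"

lemma exec_cost_eq_path_cost:
  "exec_cost X F T \<xi> \<omega> = path_cost F (jump_times (\<lambda>r. X r \<omega>) \<inter> {0<..T}) T (\<lambda>r. \<xi> r \<omega>)"
  by (simp add: exec_cost_def path_cost_def)

lemma piecewise_const_left_lim_ge:
  assumes "piecewise_const g J T" "0 < s" "s \<le> T" "\<And>s t. 0 \<le> s \<Longrightarrow> s \<le> t \<Longrightarrow> g t \<le> g s"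
  shows "g s \<le> left_lim g s"
proof -
  obtain w where "0 \<le> w" "w < s" "left_lim g s = g w"
    using piecewise_const_left[OF assms(1-3)] by metis
  with assms(4)[of w s] show ?thesis by simp
qed

lemma path_cost_dyadic_eventually:
  assumes pcx: "piecewise_const x J T" and J: "J = jump_times x \<inter> {0<..T}" and T0: "0 \<le> T"
    and pcg: "piecewise_const g J T" and anti: "\<And>s t. 0 \<le> s \<Longrightarrow> s \<le> t \<Longrightarrow> g t \<le> g s"
    and gT: "0 \<le> g T"
  shows "\<forall>\<^sub>F n in sequentially.
    (\<Sum>k<2^n. if x (real (Suc k) * T / 2^n) \<noteq> x (real k * T / 2^n)
               then F (max 0 (g (real k * T / 2^n) - g (real (Suc k) * T / 2^n))) else 0)
      + F (max 0 (g T)) = path_cost F J T g"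
proof -
  have "\<forall>\<^sub>F n in sequentially.
    (\<Sum>k<2^n. if x (real (Suc k) * T / 2^n) \<noteq> x (real k * T / 2^n)
               then F (max 0 (g (real k * T / 2^n) - g (real (Suc k) * T / 2^n))) else 0)
      = (\<Sum>s\<in>J. F (left_lim g s - g s))"
  proof (rule dyadic_increments_eventually[OF pcx J T0])
    fix s assume "s \<in> J"
    then have s: "0 < s" "s \<le> T" using J by auto
    have ge: "g s \<le> left_lim g s" by (rule piecewise_const_left_lim_ge[OF pcg s anti])
    obtain \<delta> where \<delta>: "0 < \<delta>" "\<And>a. s - \<delta> < a \<Longrightarrow> a < s \<Longrightarrow> g a = left_lim g s"
      "\<And>b. s \<le> b \<Longrightarrow> b < s + \<delta> \<Longrightarrow> b \<le> T \<Longrightarrow> g b = g s"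
      using piecewise_const_local[OF pcg s] by blast
    show "\<exists>\<delta>>0. \<forall>a b. s - \<delta> < a \<longrightarrow> a < s \<longrightarrow> s \<le> b \<longrightarrow> b \<le> T \<longrightarrow> b < s + \<delta> \<longrightarrow>
            F (max 0 (g a - g b)) = F (left_lim g s - g s)"
    proof (intro exI[of _ \<delta>] conjI allI impI)
      fix a b assume ab: "s - \<delta> < a" "a < s" "s \<le> b" "b \<le> T" "b < s + \<delta>"
      then have "g a = left_lim g s" "g b = g s" using \<delta>(2)[of a] \<delta>(3)[of b] by simp_all
      with ge show "F (max 0 (g a - g b)) = F (left_lim g s - g s)" by simp
    qed (rule \<delta>(1))
  qed
  then show ?thesis using gT by (simp add: path_cost_def)
qed

lemma path_cost_nonneg:
  assumes "piecewise_const g J T" "J \<subseteq> {0<..T}" "\<And>s t. 0 \<le> s \<Longrightarrow> s \<le> t \<Longrightarrow> g t \<le> g s"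
    and "0 \<le> g T" "\<And>x. 0 \<le> x \<Longrightarrow> 0 \<le> F x"
  shows "0 \<le> path_cost F J T g"
proof -
  have "0 \<le> F (left_lim g s - g s)" if "s \<in> J" for s
  proof -
    have "0 < s" "s \<le> T" using that assms(2) by auto
    then have "g s \<le> left_lim g s" by (rule piecewise_const_left_lim_ge[OF assms(1) _ _ assms(3)])
    then show ?thesis using assms(5) by simp
  qed
  then show ?thesis unfolding path_cost_def using assms(4,5) by (simp add: sum_nonneg)
qed

text \<open>Both paths jump only inside J, so just before a point of J their convex combination
  sits at the combination of the two left limits, and each jump of the combined path is the
  combination of the two jumps.\<close>

lemma path_cost_convex_comb:
  fixes g h :: "real \<Rightarrow> real" and a :: real
  assumes pg: "piecewise_const g J T" and ph: "piecewise_const h J T" and J: "J \<subseteq> {0<..T}"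
    and antig: "\<And>s t. 0 \<le> s \<Longrightarrow> s \<le> t \<Longrightarrow> g t \<le> g s"
    and antih: "\<And>s t. 0 \<le> s \<Longrightarrow> s \<le> t \<Longrightarrow> h t \<le> h s"
    and gT: "0 \<le> g T" and hT: "0 \<le> h T"
    and F: "convex_on {0..} F" and a: "0 \<le> a" "a \<le> 1"
  shows "path_cost F J T (\<lambda>r. a * g r + (1 - a) * h r)
           \<le> a * path_cost F J T g + (1 - a) * path_cost F J T h"
proof -
  have cvx: "F (a * p + (1 - a) * q) \<le> a * F p + (1 - a) * F q" if "0 \<le> p" "0 \<le> q" for p q
    using convex_onD[OF F, of "1 - a" p q] that a by simp
  have jump: "F (left_lim (\<lambda>r. a * g r + (1 - a) * h r) s - (a * g s + (1 - a) * h s))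
      \<le> a * F (left_lim g s - g s) + (1 - a) * F (left_lim h s - h s)" if "s \<in> J" for s
  proof -
    have s: "0 < s" "s \<le> T" using that J by auto
    obtain v where v: "0 \<le> v" "v < s" "\<And>r. v \<le> r \<Longrightarrow> r < s \<Longrightarrow> g r = g v" "left_lim g s = g v"
      using piecewise_const_left[OF pg s] by metis
    obtain w where w: "0 \<le> w" "w < s" "\<And>r. w \<le> r \<Longrightarrow> r < s \<Longrightarrow> h r = h w" "left_lim h s = h w"
      using piecewise_const_left[OF ph s] by metis
    have "left_lim (\<lambda>r. a * g r + (1 - a) * h r) s = a * g v + (1 - a) * h w"
    proof (rule left_lim_eqI[of "max v w"])
      show "max v w < s" using v(2) w(2) by simp
      fix r assume "max v w < r" "r < s"
      then show "a * g r + (1 - a) * h r = a * g v + (1 - a) * h w"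
        using v(3)[of r] w(3)[of r] by simp
    qed
    then have "left_lim (\<lambda>r. a * g r + (1 - a) * h r) s - (a * g s + (1 - a) * h s)
        = a * (left_lim g s - g s) + (1 - a) * (left_lim h s - h s)"
      using v(4) w(4) by (simp add: algebra_simps)
    moreover have "0 \<le> left_lim g s - g s" "0 \<le> left_lim h s - h s"
      using antig[OF v(1), of s] antih[OF w(1), of s] v(2,4) w(2,4) by simp_all
    ultimately show ?thesis using cvx by simp
  qed
  have "(\<Sum>s\<in>J. F (left_lim (\<lambda>r. a * g r + (1 - a) * h r) s - (a * g s + (1 - a) * h s)))
      \<le> (\<Sum>s\<in>J. a * F (left_lim g s - g s) + (1 - a) * F (left_lim h s - h s))"
    by (rule sum_mono) (rule jump)
  also have "\<dots> = a * (\<Sum>s\<in>J. F (left_lim g s - g s)) + (1 - a) * (\<Sum>s\<in>J. F (left_lim h s - h s))"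
    by (simp add: sum.distrib sum_distrib_left)
  finally have jumps: "(\<Sum>s\<in>J. F (left_lim (\<lambda>r. a * g r + (1 - a) * h r) s - (a * g s + (1 - a) * h s)))
      \<le> a * (\<Sum>s\<in>J. F (left_lim g s - g s)) + (1 - a) * (\<Sum>s\<in>J. F (left_lim h s - h s))" .
  from add_mono[OF jumps cvx[OF gT hT]] show ?thesis
    by (simp add: path_cost_def algebra_simps)
qed

lemma
  assumes "admissible P X x \<xi>" "\<omega> \<in> space P"
  shows admissible_start: "\<xi> 0 \<omega> = x"
    and admissible_nonneg: "0 \<le> t \<Longrightarrow> 0 \<le> \<xi> t \<omega>"
    and admissible_antimono: "0 \<le> s \<Longrightarrow> s \<le> t \<Longrightarrow> \<xi> t \<omega> \<le> \<xi> s \<omega>"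
    and admissible_const_between_jumps:
      "0 \<le> s \<Longrightarrow> s \<le> t \<Longrightarrow> {s<..t} \<inter> jump_times (\<lambda>r. X r \<omega>) = {} \<Longrightarrow> \<xi> t \<omega> = \<xi> s \<omega>"
  using assms unfolding admissible_def by blast+

lemma admissible_measurable_nat_filt:
  "admissible P X x \<xi> \<Longrightarrow> 0 \<le> t \<Longrightarrow> \<xi> t \<in> borel_measurable (nat_filt P X t)"
  unfolding admissible_def by blast

lemma admissible_const: "0 \<le> x \<Longrightarrow> admissible P X x (\<lambda>t \<omega>. x)"
  unfolding admissible_def by simp

lemma admissible_convex_comb:
  assumes \<xi>: "admissible P X x \<xi>" and \<eta>: "admissible P X y \<eta>" and a: "0 \<le> a" "a \<le> 1"
  shows "admissible P X (a * x + (1 - a) * y) (\<lambda>t \<omega>. a * \<xi> t \<omega> + (1 - a) * \<eta> t \<omega>)"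
  unfolding admissible_def
proof (intro conjI allI impI ballI)
  fix t :: real assume "0 \<le> t"
  then show "(\<lambda>\<omega>. a * \<xi> t \<omega> + (1 - a) * \<eta> t \<omega>) \<in> borel_measurable (nat_filt P X t)"
    using admissible_measurable_nat_filt[OF \<xi>] admissible_measurable_nat_filt[OF \<eta>] by measurable
next
  fix \<omega> assume \<omega>: "\<omega> \<in> space P"
  show "a * \<xi> 0 \<omega> + (1 - a) * \<eta> 0 \<omega> = a * x + (1 - a) * y"
    using admissible_start[OF \<xi> \<omega>] admissible_start[OF \<eta> \<omega>] by simp
  fix s t :: real
  show "0 \<le> a * \<xi> t \<omega> + (1 - a) * \<eta> t \<omega>" if "0 \<le> t"
    using admissible_nonneg[OF \<xi> \<omega> that] admissible_nonneg[OF \<eta> \<omega> that] a by simp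
  show "a * \<xi> t \<omega> + (1 - a) * \<eta> t \<omega> \<le> a * \<xi> s \<omega> + (1 - a) * \<eta> s \<omega>" if "0 \<le> s" "s \<le> t"
    using admissible_antimono[OF \<xi> \<omega> that] admissible_antimono[OF \<eta> \<omega> that] a
    by (intro add_mono mult_left_mono) auto
  show "a * \<xi> t \<omega> + (1 - a) * \<eta> t \<omega> = a * \<xi> s \<omega> + (1 - a) * \<eta> s \<omega>"
    if "0 \<le> s" "s \<le> t" "{s<..t} \<inter> jump_times (\<lambda>r. X r \<omega>) = {}"
    using admissible_const_between_jumps[OF \<xi> \<omega> that] admissible_const_between_jumps[OF \<eta> \<omega> that]
    by simp
qed

lemma admissible_piecewise_const:
  assumes "admissible P X x \<xi>" "\<omega> \<in> space P" "finite (jump_times (\<lambda>r. X r \<omega>) \<inter> {0<..T})"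
  shows "piecewise_const (\<lambda>r. \<xi> r \<omega>) (jump_times (\<lambda>r. X r \<omega>) \<inter> {0<..T}) T"
  unfolding piecewise_const_def
proof (intro conjI allI impI)
  fix u v assume uv: "0 \<le> u" "u \<le> v" "v \<le> T" "{u<..v} \<inter> (jump_times (\<lambda>r. X r \<omega>) \<inter> {0<..T}) = {}"
  then have "{u<..v} \<inter> jump_times (\<lambda>r. X r \<omega>) = {}" by auto
  with uv show "\<xi> v \<omega> = \<xi> u \<omega>" by (intro admissible_const_between_jumps[OF assms(1,2)])
qed (rule assms(3))

lemma sets_nat_filt_subset:
  assumes "\<And>s. 0 \<le> s \<Longrightarrow> s \<le> t \<Longrightarrow> X s \<in> borel_measurable C" "space C = space P"
  shows "sets (nat_filt P X t) \<subseteq> sets C"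
proof -
  define G where "G = {X s -` B \<inter> space P | s B. 0 \<le> s \<and> s \<le> t \<and> B \<in> sets borel}"
  have "G \<subseteq> Pow (space P)" unfolding G_def by auto
  then have "sets (nat_filt P X t) = sigma_sets (space P) G"
    unfolding nat_filt_def G_def[symmetric] by simp
  moreover have "G \<subseteq> sets C"
    unfolding G_def using measurable_sets[OF assms(1)] assms(2) by fastforce
  ultimately show ?thesis using sets.sigma_sets_subset[of G C] assms(2) by simp
qed

lemma admissible_borel_measurable:
  assumes "admissible P X x \<xi>" "0 \<le> t"
    and "\<And>s. 0 \<le> s \<Longrightarrow> s \<le> t \<Longrightarrow> X s \<in> borel_measurable C" "space C = space P"
  shows "\<xi> t \<in> borel_measurable C"
proof (rule borel_measurable_subalgebra[OF sets_nat_filt_subset[OF assms(3,4)]])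
  show "space (nat_filt P X t) = space C" using assms(4) by (simp add: nat_filt_def space_measure_of_conv)
  show "\<xi> t \<in> borel_measurable (nat_filt P X t)" by (rule admissible_measurable_nat_filt[OF assms(1,2)])
qed

text \<open>The cost sums over the jump times of a path, a set that depends on the path; its
  measurability comes from reading the cost off a dyadic grid, along which it is eventually
  constant on almost every path.\<close>

lemma exec_cost_borel_measurable:
  assumes X: "\<And>t. 0 \<le> t \<Longrightarrow> X t \<in> borel_measurable (completion P)"
    and paths: "AE \<omega> in P. piecewise_const (\<lambda>r. X r \<omega>) (jump_times (\<lambda>r. X r \<omega>) \<inter> {0<..T}) T"
    and adm: "admissible P X x \<xi>" and F: "mono_on {0..} F" and T: "0 \<le> T"
  shows "(\<lambda>\<omega>. exec_cost X F T \<xi> \<omega>) \<in> borel_measurable (completion P)"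
proof -
  define E where "E n \<omega> = (\<Sum>k<2^n. if X (real (Suc k) * T / 2^n) \<omega> \<noteq> X (real k * T / 2^n) \<omega>
      then F (max 0 (\<xi> (real k * T / 2^n) \<omega> - \<xi> (real (Suc k) * T / 2^n) \<omega>)) else 0)
      + F (max 0 (\<xi> T \<omega>))" for n \<omega>
  have "E n \<in> borel_measurable (completion P)" for n
  proof -
    note [measurable] = borel_measurable_mono_on_max_0[OF F]
    have [measurable]: "X (real k * T / 2^n) \<in> borel_measurable (completion P)" for k
      using T by (intro X) simp
    have [measurable]: "\<xi> (real k * T / 2^n) \<in> borel_measurable (completion P)" for k
      using T X by (intro admissible_borel_measurable[OF adm]) simp_all
    have [measurable]: "\<xi> T \<in> borel_measurable (completion P)"
      using T X by (intro admissible_borel_measurable[OF adm]) simp_all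
    show ?thesis unfolding E_def by measurable
  qed
  moreover have "AE \<omega> in P. (\<lambda>n. E n \<omega>) \<longlonglongrightarrow> exec_cost X F T \<xi> \<omega>"
    using paths AE_space
  proof eventually_elim
    case (elim \<omega>)
    have "\<forall>\<^sub>F n in sequentially. E n \<omega> = exec_cost X F T \<xi> \<omega>"
      unfolding E_def exec_cost_eq_path_cost
      by (rule path_cost_dyadic_eventually[OF elim(1) refl T
            admissible_piecewise_const[OF adm elim(2) piecewise_const_finite[OF elim(1)]]
            admissible_antimono[OF adm elim(2)] admissible_nonneg[OF adm elim(2) T]])
    then show ?case by (rule tendsto_eventually)
  qed
  ultimately show ?thesis by (rule borel_measurable_completion_AE_LIMSEQ)
qed

lemma exec_cost_nonneg:
  assumes "admissible P X x \<xi>" "\<omega> \<in> space P" "0 \<le> T"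
    and "piecewise_const (\<lambda>r. X r \<omega>) (jump_times (\<lambda>r. X r \<omega>) \<inter> {0<..T}) T"
    and "\<And>x. 0 \<le> x \<Longrightarrow> 0 \<le> F x"
  shows "0 \<le> exec_cost X F T \<xi> \<omega>"
  unfolding exec_cost_eq_path_cost
  by (rule path_cost_nonneg[OF admissible_piecewise_const[OF assms(1,2) piecewise_const_finite[OF assms(4)]]
        _ admissible_antimono[OF assms(1,2)] admissible_nonneg[OF assms(1-3)] assms(5)]) auto

lemma exec_cost_convex_comb:
  assumes \<xi>: "admissible P X x \<xi>" and \<eta>: "admissible P X y \<eta>" and \<omega>: "\<omega> \<in> space P" and T: "0 \<le> T"
    and path: "piecewise_const (\<lambda>r. X r \<omega>) (jump_times (\<lambda>r. X r \<omega>) \<inter> {0<..T}) T"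
    and F: "convex_on {0..} F" and a: "0 \<le> a" "a \<le> 1"
  shows "exec_cost X F T (\<lambda>t \<omega>. a * \<xi> t \<omega> + (1 - a) * \<eta> t \<omega>) \<omega>
           \<le> a * exec_cost X F T \<xi> \<omega> + (1 - a) * exec_cost X F T \<eta> \<omega>"
proof -
  note fin = piecewise_const_finite[OF path]
  show ?thesis
    unfolding exec_cost_eq_path_cost
    by (rule path_cost_convex_comb[OF admissible_piecewise_const[OF \<xi> \<omega> fin]
          admissible_piecewise_const[OF \<eta> \<omega> fin] _ admissible_antimono[OF \<xi> \<omega>] admissible_antimono[OF \<eta> \<omega>]
          admissible_nonneg[OF \<xi> \<omega> T] admissible_nonneg[OF \<eta> \<omega> T] F a]) auto
qed

lemma expected_exec_cost_convex_comb:
  assumes X: "\<And>t. 0 \<le> t \<Longrightarrow> X t \<in> borel_measurable (completion P)"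
    and paths: "AE \<omega> in P. piecewise_const (\<lambda>r. X r \<omega>) (jump_times (\<lambda>r. X r \<omega>) \<inter> {0<..T}) T"
    and F: "\<And>x. 0 \<le> x \<Longrightarrow> 0 \<le> F x" "mono_on {0..} F" "convex_on {0..} F" and T: "0 \<le> T"
    and \<xi>: "admissible P X x \<xi>" and \<eta>: "admissible P X y \<eta>" and a: "0 \<le> a" "a \<le> 1"
  shows "(\<integral>\<^sup>+\<omega>. exec_cost X F T (\<lambda>t \<omega>. a * \<xi> t \<omega> + (1 - a) * \<eta> t \<omega>) \<omega> \<partial>P)
           \<le> ennreal a * (\<integral>\<^sup>+\<omega>. exec_cost X F T \<xi> \<omega> \<partial>P) + ennreal (1 - a) * (\<integral>\<^sup>+\<omega>. exec_cost X F T \<eta> \<omega> \<partial>P)"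
proof -
  have [measurable]: "(\<lambda>\<omega>. exec_cost X F T \<xi> \<omega>) \<in> borel_measurable (completion P)"
    by (rule exec_cost_borel_measurable[OF X paths \<xi> F(2) T])
  have [measurable]: "(\<lambda>\<omega>. exec_cost X F T \<eta> \<omega>) \<in> borel_measurable (completion P)"
    by (rule exec_cost_borel_measurable[OF X paths \<eta> F(2) T])
  have "AE \<omega> in P. ennreal (exec_cost X F T (\<lambda>t \<omega>. a * \<xi> t \<omega> + (1 - a) * \<eta> t \<omega>) \<omega>)
      \<le> ennreal a * ennreal (exec_cost X F T \<xi> \<omega>) + ennreal (1 - a) * ennreal (exec_cost X F T \<eta> \<omega>)"
    using paths AE_space
  proof eventually_elim
    case (elim \<omega>)
    have "0 \<le> exec_cost X F T \<xi> \<omega>"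
      by (rule exec_cost_nonneg[where F = F, OF \<xi> elim(2) T elim(1) F(1)])
    moreover have "0 \<le> exec_cost X F T \<eta> \<omega>"
      by (rule exec_cost_nonneg[where F = F, OF \<eta> elim(2) T elim(1) F(1)])
    moreover have "ennreal (exec_cost X F T (\<lambda>t \<omega>. a * \<xi> t \<omega> + (1 - a) * \<eta> t \<omega>) \<omega>)
        \<le> ennreal (a * exec_cost X F T \<xi> \<omega> + (1 - a) * exec_cost X F T \<eta> \<omega>)"
      by (rule ennreal_leI, rule exec_cost_convex_comb[OF \<xi> \<eta> elim(2) T elim(1) F(3) a])
    ultimately show ?case using a by (simp add: ennreal_plus ennreal_mult)
  qed
  then have "(\<integral>\<^sup>+\<omega>. exec_cost X F T (\<lambda>t \<omega>. a * \<xi> t \<omega> + (1 - a) * \<eta> t \<omega>) \<omega> \<partial>completion P)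
      \<le> (\<integral>\<^sup>+\<omega>. ennreal a * exec_cost X F T \<xi> \<omega> + ennreal (1 - a) * exec_cost X F T \<eta> \<omega> \<partial>completion P)"
    by (intro nn_integral_mono_AE AE_completion)
  also have "\<dots> = ennreal a * (\<integral>\<^sup>+\<omega>. exec_cost X F T \<xi> \<omega> \<partial>completion P)
      + ennreal (1 - a) * (\<integral>\<^sup>+\<omega>. exec_cost X F T \<eta> \<omega> \<partial>completion P)"
    by (simp add: nn_integral_add nn_integral_cmult)
  finally show ?thesis by (simp only: nn_integral_completion)
qed

lemma value_fn_convex:
  assumes X: "\<And>t. 0 \<le> t \<Longrightarrow> X t \<in> borel_measurable (completion P)"
    and paths: "AE \<omega> in P. piecewise_const (\<lambda>r. X r \<omega>) (jump_times (\<lambda>r. X r \<omega>) \<inter> {0<..T}) T"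
    and F: "\<And>x. 0 \<le> x \<Longrightarrow> 0 \<le> F x" "mono_on {0..} F" "convex_on {0..} F" and T: "0 \<le> T"
    and xy: "0 \<le> x" "0 \<le> y" and a: "0 \<le> a" "a \<le> 1"
  shows "value_fn P X F T (a * x + (1 - a) * y)
           \<le> ennreal a * value_fn P X F T x + ennreal (1 - a) * value_fn P X F T y"
  unfolding value_fn_def
proof (rule le_add_mult_INF)
  show "{\<xi>. admissible P X x \<xi>} \<noteq> {}" "{\<xi>. admissible P X y \<xi>} \<noteq> {}"
    using admissible_const[OF xy(1)] admissible_const[OF xy(2)] by blast+
  fix \<xi> \<eta> assume "\<xi> \<in> {\<xi>. admissible P X x \<xi>}" "\<eta> \<in> {\<xi>. admissible P X y \<xi>}"
  then have \<xi>: "admissible P X x \<xi>" and \<eta>: "admissible P X y \<eta>" by simp_all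
  have "(INF \<zeta>\<in>{\<zeta>. admissible P X (a * x + (1 - a) * y) \<zeta>}. \<integral>\<^sup>+\<omega>. exec_cost X F T \<zeta> \<omega> \<partial>P)
      \<le> (\<integral>\<^sup>+\<omega>. exec_cost X F T (\<lambda>t \<omega>. a * \<xi> t \<omega> + (1 - a) * \<eta> t \<omega>) \<omega> \<partial>P)"
    using admissible_convex_comb[OF \<xi> \<eta> a] by (intro INF_lower) simp
  also have "\<dots> \<le> ennreal a * (\<integral>\<^sup>+\<omega>. exec_cost X F T \<xi> \<omega> \<partial>P)
      + ennreal (1 - a) * (\<integral>\<^sup>+\<omega>. exec_cost X F T \<eta> \<omega> \<partial>P)"
    by (rule expected_exec_cost_convex_comb[OF X paths F T \<xi> \<eta> a])
  finally show "(INF \<zeta>\<in>{\<zeta>. admissible P X (a * x + (1 - a) * y) \<zeta>}. \<integral>\<^sup>+\<omega>. exec_cost X F T \<zeta> \<omega> \<partial>P)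
      \<le> ennreal a * (\<integral>\<^sup>+\<omega>. exec_cost X F T \<xi> \<omega> \<partial>P)
      + ennreal (1 - a) * (\<integral>\<^sup>+\<omega>. exec_cost X F T \<eta> \<omega> \<partial>P)" .
qed simp_all

lemma erlang_CDF_tendsto_0:
  assumes "0 < l" "0 \<le> x"
  shows "(\<lambda>k. erlang_CDF k l x) \<longlonglongrightarrow> 0"
proof -
  have exp: "(\<lambda>n. \<Sum>i\<le>n. (l * x) ^ i /\<^sub>R fact i) \<longlonglongrightarrow> exp (l * x)"
    using exp_converges[of "l * x"] unfolding sums_def_le .
  have eq: "erlang_CDF k l x = 1 - exp (- l * x) * (\<Sum>i\<le>k. (l * x) ^ i /\<^sub>R fact i)" for k
    using assms by (simp add: erlang_CDF_def sum_distrib_left divide_inverse mult_ac)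
  have "(\<lambda>k. 1 - exp (- l * x) * (\<Sum>i\<le>k. (l * x) ^ i /\<^sub>R fact i)) \<longlonglongrightarrow> 1 - exp (- l * x) * exp (l * x)"
    by (intro tendsto_intros exp)
  also have "1 - exp (- l * x) * exp (l * x) = 0" by (simp add: exp_add[symmetric])
  finally show ?thesis unfolding eq .
qed

text \<open>The k-th arrival time is Erlang distributed, and the Erlang CDF at any fixed level tends
  to 0 as k grows.\<close>

lemma (in prob_space) arrival_times_unbounded_AE:
  fixes S :: "nat \<Rightarrow> 'a \<Rightarrow> real" and Z :: "nat + 'b \<Rightarrow> 'a \<Rightarrow> real"
  assumes lam: "0 < lam" and S: "\<And>k. S k \<in> borel_measurable M" "\<And>\<omega>. S 0 \<omega> = 0"
    and Z: "\<And>n. Z (Inl n) = (\<lambda>\<omega>. S (Suc n) \<omega> - S n \<omega>)"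
    and exp: "\<And>n. distributed M lborel (Z (Inl n)) (exponential_density lam)"
    and ind: "indep_vars (\<lambda>_. borel) Z UNIV"
  shows "AE \<omega> in M. \<forall>x. \<exists>k. x < S k \<omega>"
proof -
  note S(1)[measurable]
  have "AE \<omega> in M. \<exists>k. real N < S k \<omega>" for N :: nat
  proof -
    define A where "A = {\<omega>\<in>space M. \<forall>k. S k \<omega> \<le> real N}"
    have A: "A \<in> sets M" unfolding A_def by measurable
    have "prob A \<le> erlang_CDF k lam (real N)" for k
    proof -
      define I :: "(nat + 'b) set" where "I = Inl ` {..<Suc k}"
      have "distributed M lborel (\<lambda>\<omega>. \<Sum>i\<in>I. Z i \<omega>) (erlang_density (card I - 1) lam)"
      proof (rule exponential_distributed_sum)
        show "finite I" "I \<noteq> {}" "0 < lam" using lam by (auto simp: I_def)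
        show "distributed M lborel (Z i) (exponential_density lam)" if "i \<in> I" for i
          using that exp by (auto simp: I_def)
        show "indep_vars (\<lambda>i. borel) Z I" using ind by (rule indep_vars_subset) simp
      qed
      moreover have "card I = Suc k" by (simp add: I_def card_image)
      moreover have "(\<Sum>i\<in>I. Z i \<omega>) = S (Suc k) \<omega>" for \<omega>
      proof -
        have "(\<Sum>i\<in>I. Z i \<omega>) = (\<Sum>n<Suc k. S (Suc n) \<omega> - S n \<omega>)"
          by (simp add: I_def sum.reindex Z)
        also have "\<dots> = S (Suc k) \<omega>" by (subst sum_lessThan_telescope) (simp add: S(2))
        finally show ?thesis .
      qed
      ultimately have "prob {\<omega>\<in>space M. S (Suc k) \<omega> \<le> real N} = erlang_CDF k lam (real N)"
        using erlang_distributed_le[of _ k lam "real N"] lam by simp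
      moreover have "prob A \<le> prob {\<omega>\<in>space M. S (Suc k) \<omega> \<le> real N}"
        by (rule finite_measure_mono) (auto simp: A_def)
      ultimately show ?thesis by simp
    qed
    then have "prob A \<le> 0"
      by (intro LIMSEQ_le_const[OF erlang_CDF_tendsto_0[OF lam, of "real N"]]) auto
    then have "A \<in> null_sets M" using A by (simp add: emeasure_eq_measure null_sets_def measure_le_0_iff)
    then show ?thesis by (rule AE_I') (auto simp: A_def not_less)
  qed
  then have "AE \<omega> in M. \<forall>N::nat. \<exists>k. real N < S k \<omega>" by (simp add: AE_all_countable)
  then show ?thesis
  proof eventually_elim
    case (elim \<omega>)
    show "\<forall>x. \<exists>k. x < S k \<omega>"
    proof
      fix x :: real
      obtain N :: nat where "x \<le> real N" using real_arch_simple by blast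
      with elim show "\<exists>k. x < S k \<omega>" by (meson le_less_trans)
    qed
  qed
qed

lemma counting_sum_piecewise_const:
  fixes S Y :: "nat \<Rightarrow> real" and X :: "real \<Rightarrow> real"
  assumes mono: "\<And>k. S k \<le> S (Suc k)" and unbounded: "t < S k0"
    and X: "\<And>r. 0 \<le> r \<Longrightarrow> X r = (\<Sum>k\<in>{k. 1 \<le> k \<and> S k \<le> r}. Y k)"
  shows "piecewise_const X (S ` {k. 1 \<le> k \<and> S k \<le> t}) t"
  unfolding piecewise_const_def
proof (intro conjI allI impI)
  have "{k. 1 \<le> k \<and> S k \<le> t} \<subseteq> {..<k0}"
    using lift_Suc_mono_le[of S, OF mono] unbounded by (force simp: not_less[symmetric])
  then show "finite (S ` {k. 1 \<le> k \<and> S k \<le> t})" by (meson finite_imageI finite_lessThan finite_subset)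
  fix u v assume uv: "0 \<le> u" "u \<le> v" "v \<le> t" "{u<..v} \<inter> S ` {k. 1 \<le> k \<and> S k \<le> t} = {}"
  have "{k. 1 \<le> k \<and> S k \<le> v} = {k. 1 \<le> k \<and> S k \<le> u}"
  proof (intro set_eqI iffI)
    fix k assume k: "k \<in> {k. 1 \<le> k \<and> S k \<le> v}"
    then have "S k \<notin> {u<..v}" using uv(3,4) by auto
    with k show "k \<in> {k. 1 \<le> k \<and> S k \<le> u}" by auto
  qed (use uv in auto)
  then show "X v = X u" using X uv(1,2) by simp
qed

lemma compound_poisson_paths_AE:
  assumes P: "prob_space P" and lam: "0 < lam" and cp: "compound_poisson P lam nu X"
  shows "AE \<omega> in P. \<forall>t\<ge>0. piecewise_const (\<lambda>r. X r \<omega>) (jump_times (\<lambda>r. X r \<omega>) \<inter> {0<..t}) t"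
proof -
  interpret prob_space P by (rule P)
  obtain S Y where S: "\<And>k. S k \<in> borel_measurable P" "\<And>\<omega>. S 0 \<omega> = 0"
    and ind: "indep_vars (\<lambda>_. borel) (\<lambda>k \<omega>. case k of Inl n \<Rightarrow> S (Suc n) \<omega> - S n \<omega> | Inr n \<Rightarrow> Y n \<omega>) UNIV"
    and exp: "\<And>n. distributed P lborel (\<lambda>\<omega>. S (Suc n) \<omega> - S n \<omega>) (exponential_density lam)"
    and sums: "AE \<omega> in P. \<forall>t\<ge>0. X t \<omega> = (\<Sum>k\<in>{k. 1 \<le> k \<and> S k \<omega> \<le> t}. Y k \<omega>)"
    using cp unfolding compound_poisson_def by blast
  have "AE \<omega> in P. S n \<omega> \<le> S (Suc n) \<omega>" for n
  proof -
    have "prob {\<omega>\<in>space P. S (Suc n) \<omega> - S n \<omega> \<le> 0} = 0"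
      using exponential_distributedD_le[OF exp order_refl lam] by simp
    then have "{\<omega>\<in>space P. S (Suc n) \<omega> - S n \<omega> \<le> 0} \<in> null_sets P"
      using S(1) by (simp add: emeasure_eq_measure null_sets_def)
    then show ?thesis by (rule AE_I') auto
  qed
  then have mono: "AE \<omega> in P. \<forall>n. S n \<omega> \<le> S (Suc n) \<omega>" by (simp add: AE_all_countable)
  have unbounded: "AE \<omega> in P. \<forall>x. \<exists>k. x < S k \<omega>"
    by (rule arrival_times_unbounded_AE[where S = S, OF lam S _ _ ind]) (simp_all add: exp)
  show ?thesis
    using mono unbounded sums
  proof eventually_elim
    case (elim \<omega>)
    show ?case
    proof (intro allI impI)
      fix t :: real assume "0 \<le> t"
      obtain k0 where "t < S k0 \<omega>" using elim(2) by blast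
      with elim(1,3) have "piecewise_const (\<lambda>r. X r \<omega>) ((\<lambda>k. S k \<omega>) ` {k. 1 \<le> k \<and> S k \<omega> \<le> t}) t"
        by (intro counting_sum_piecewise_const[of "\<lambda>k. S k \<omega>"]) auto
      then show "piecewise_const (\<lambda>r. X r \<omega>) (jump_times (\<lambda>r. X r \<omega>) \<inter> {0<..t}) t"
        by (rule piecewise_const_jump_times)
    qed
  qed
qed

lemma observed_piecewise_const:
  fixes M :: "real \<Rightarrow> 'a \<Rightarrow> 'e::finite"
  assumes "\<And>i. piecewise_const (\<lambda>r. Nc i r \<omega>) (jump_times (\<lambda>r. Nc i r \<omega>) \<inter> {0<..t}) t"
  shows "piecewise_const (\<lambda>r. observed M Nc r \<omega>) (jump_times (\<lambda>r. observed M Nc r \<omega>) \<inter> {0<..t}) t"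
proof (rule piecewise_const_jump_times)
  define J where "J = (\<Union>i. jump_times (\<lambda>r. Nc i r \<omega>) \<inter> {0<..t})"
  show "piecewise_const (\<lambda>r. observed M Nc r \<omega>) J t"
    unfolding piecewise_const_def
  proof (intro conjI allI impI)
    show "finite J" unfolding J_def by (intro finite_UN_I) (simp_all add: piecewise_const_finite[OF assms])
    fix u v assume uv: "0 \<le> u" "u \<le> v" "v \<le> t" "{u<..v} \<inter> J = {}"
    have "jump_times (\<lambda>r. Nc i r \<omega>) \<inter> {0<..v} = jump_times (\<lambda>r. Nc i r \<omega>) \<inter> {0<..u}" for i
    proof
      show "jump_times (\<lambda>r. Nc i r \<omega>) \<inter> {0<..v} \<subseteq> jump_times (\<lambda>r. Nc i r \<omega>) \<inter> {0<..u}"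
      proof
        fix s assume s: "s \<in> jump_times (\<lambda>r. Nc i r \<omega>) \<inter> {0<..v}"
        then have "s \<in> J" using uv(3) by (auto simp: J_def)
        with uv(4) have "s \<notin> {u<..v}" by blast
        with s show "s \<in> jump_times (\<lambda>r. Nc i r \<omega>) \<inter> {0<..u}" by auto
      qed
    qed (use uv in auto)
    then show "observed M Nc v \<omega> = observed M Nc u \<omega>" unfolding observed_def by simp
  qed
qed

lemma observed_dyadic_eventually:
  fixes M :: "real \<Rightarrow> 'a \<Rightarrow> 'e::finite"
  assumes right: "\<And>s. 0 \<le> s \<Longrightarrow> \<exists>\<epsilon>>0. \<forall>r\<in>{s..<s+\<epsilon>}. M r \<omega> = M s \<omega>"
    and paths: "\<And>i. piecewise_const (\<lambda>r. Nc i r \<omega>) (jump_times (\<lambda>r. Nc i r \<omega>) \<inter> {0<..t}) t"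
    and t: "0 \<le> t"
  shows "\<forall>\<^sub>F n in sequentially. (\<Sum>i\<in>UNIV. \<Sum>k<2^n.
           if Nc i (real (Suc k) * t / 2^n) \<omega> \<noteq> Nc i (real k * t / 2^n) \<omega>
           then (if M (real (Suc k) * t / 2^n) \<omega> = i
                 then Nc i (real (Suc k) * t / 2^n) \<omega> - Nc i (real k * t / 2^n) \<omega> else 0)
           else 0) = observed M Nc t \<omega>"
proof -
  have "\<forall>\<^sub>F n in sequentially. (\<Sum>k<2^n.
           if Nc i (real (Suc k) * t / 2^n) \<omega> \<noteq> Nc i (real k * t / 2^n) \<omega>
           then (if M (real (Suc k) * t / 2^n) \<omega> = i
                 then Nc i (real (Suc k) * t / 2^n) \<omega> - Nc i (real k * t / 2^n) \<omega> else 0)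
           else 0)
      = (\<Sum>s\<in>jump_times (\<lambda>r. Nc i r \<omega>) \<inter> {0<..t}.
           if M s \<omega> = i then Nc i s \<omega> - left_lim (\<lambda>r. Nc i r \<omega>) s else 0)" for i
  proof (rule dyadic_increments_eventually[OF paths refl t])
    fix s assume "s \<in> jump_times (\<lambda>r. Nc i r \<omega>) \<inter> {0<..t}"
    then have s: "0 < s" "s \<le> t" by auto
    obtain \<delta> where \<delta>: "0 < \<delta>" "\<And>a. s - \<delta> < a \<Longrightarrow> a < s \<Longrightarrow> Nc i a \<omega> = left_lim (\<lambda>r. Nc i r \<omega>) s"
      "\<And>b. s \<le> b \<Longrightarrow> b < s + \<delta> \<Longrightarrow> b \<le> t \<Longrightarrow> Nc i b \<omega> = Nc i s \<omega>"
      using piecewise_const_local[OF paths s] by blast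
    obtain \<epsilon> where \<epsilon>: "0 < \<epsilon>" "\<forall>r\<in>{s..<s+\<epsilon>}. M r \<omega> = M s \<omega>"
      using right[of s] s by auto
    show "\<exists>\<delta>>0. \<forall>a b. s - \<delta> < a \<longrightarrow> a < s \<longrightarrow> s \<le> b \<longrightarrow> b \<le> t \<longrightarrow> b < s + \<delta> \<longrightarrow>
        (if M b \<omega> = i then Nc i b \<omega> - Nc i a \<omega> else 0)
          = (if M s \<omega> = i then Nc i s \<omega> - left_lim (\<lambda>r. Nc i r \<omega>) s else 0)"
    proof (intro exI[of _ "min \<delta> \<epsilon>"] conjI allI impI)
      fix a b assume ab: "s - min \<delta> \<epsilon> < a" "a < s" "s \<le> b" "b \<le> t" "b < s + min \<delta> \<epsilon>"
      then have "Nc i a \<omega> = left_lim (\<lambda>r. Nc i r \<omega>) s" "Nc i b \<omega> = Nc i s \<omega>" "M b \<omega> = M s \<omega>"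
        using \<delta>(2)[of a] \<delta>(3)[of b] \<epsilon>(2)[rule_format, of b] by simp_all
      then show "(if M b \<omega> = i then Nc i b \<omega> - Nc i a \<omega> else 0)
          = (if M s \<omega> = i then Nc i s \<omega> - left_lim (\<lambda>r. Nc i r \<omega>) s else 0)" by simp
    qed (use \<delta>(1) \<epsilon>(1) in simp)
  qed
  then have "\<forall>\<^sub>F n in sequentially. \<forall>i. (\<Sum>k<2^n.
           if Nc i (real (Suc k) * t / 2^n) \<omega> \<noteq> Nc i (real k * t / 2^n) \<omega>
           then (if M (real (Suc k) * t / 2^n) \<omega> = i
                 then Nc i (real (Suc k) * t / 2^n) \<omega> - Nc i (real k * t / 2^n) \<omega> else 0)
           else 0)
      = (\<Sum>s\<in>jump_times (\<lambda>r. Nc i r \<omega>) \<inter> {0<..t}.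
           if M s \<omega> = i then Nc i s \<omega> - left_lim (\<lambda>r. Nc i r \<omega>) s else 0)"
    by (rule eventually_all_finite)
  then show ?thesis
    by eventually_elim (simp only: observed_def)
qed

lemma observed_borel_measurable:
  fixes M :: "real \<Rightarrow> 'a \<Rightarrow> 'e::finite"
  assumes M: "\<And>t. M t \<in> measurable P (count_space UNIV)" and Nc: "\<And>i t. Nc i t \<in> borel_measurable P"
    and right: "\<And>\<omega> s. 0 \<le> s \<Longrightarrow> \<exists>\<epsilon>>0. \<forall>r\<in>{s..<s+\<epsilon>}. M r \<omega> = M s \<omega>"
    and paths: "AE \<omega> in P. \<forall>i. piecewise_const (\<lambda>r. Nc i r \<omega>) (jump_times (\<lambda>r. Nc i r \<omega>) \<inter> {0<..t}) t"
    and t: "0 \<le> t"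
  shows "observed M Nc t \<in> borel_measurable (completion P)"
proof -
  note [measurable] = M Nc
  define D where "D n \<omega> = (\<Sum>i\<in>UNIV. \<Sum>k<2^n.
           if Nc i (real (Suc k) * t / 2^n) \<omega> \<noteq> Nc i (real k * t / 2^n) \<omega>
           then (if M (real (Suc k) * t / 2^n) \<omega> = i
                 then Nc i (real (Suc k) * t / 2^n) \<omega> - Nc i (real k * t / 2^n) \<omega> else 0)
           else 0)" for n \<omega>
  have "D n \<in> borel_measurable P" for n unfolding D_def by measurable
  then have "D n \<in> borel_measurable (completion P)" for n by (rule measurable_completion)
  moreover have "AE \<omega> in P. (\<lambda>n. D n \<omega>) \<longlonglongrightarrow> observed M Nc t \<omega>"
    using paths
  proof eventually_elim
    case (elim \<omega>)
    have "\<forall>\<^sub>F n in sequentially. D n \<omega> = observed M Nc t \<omega>"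
      unfolding D_def by (rule observed_dyadic_eventually[OF right _ t]) (use elim in auto)
    then show ?case by (rule tendsto_eventually)
  qed
  ultimately show ?thesis by (rule borel_measurable_completion_AE_LIMSEQ)
qed

theorem lemma3p6:
  fixes P :: "'a measure" and M :: "real \<Rightarrow> 'a \<Rightarrow> 'e::finite"
    and Nc :: "'e \<Rightarrow> real \<Rightarrow> 'a \<Rightarrow> real"
    and Q :: "'e \<Rightarrow> 'e \<Rightarrow> real" and lam :: "'e \<Rightarrow> real" and nu :: "'e \<Rightarrow> real measure"
    and p0 :: "'e \<Rightarrow> real" and F :: "real \<Rightarrow> real" and T :: real
  assumes "prob_space P"
    and "is_generator Q"
    and "\<forall>i. 0 \<le> p0 i" and "(\<Sum>i\<in>UNIV. p0 i) = 1"
    and "ctmc P M Q p0"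
    and "\<forall>i. 0 < lam i"
    and "\<forall>i. prob_space (nu i) \<and> sets (nu i) = sets borel"
    and "\<forall>i. compound_poisson P (lam i) (nu i) (Nc i)"
    and "prob_space.indep_vars P (\<lambda>_. Pi\<^sub>M UNIV (\<lambda>_. borel)) (\<lambda>i \<omega> t. Nc i t \<omega>) UNIV"
    and "prob_space.indep_set P
           {(\<lambda>\<omega> t. M t \<omega>) -` A \<inter> space P | A. A \<in> sets (Pi\<^sub>M UNIV (\<lambda>_. count_space UNIV))}
           {(\<lambda>\<omega> i t. Nc i t \<omega>) -` A \<inter> space P | A. A \<in> sets (Pi\<^sub>M UNIV (\<lambda>_. Pi\<^sub>M UNIV (\<lambda>_. borel)))}"
    and "\<forall>x\<ge>0. 0 \<le> F x"
    and "strict_mono_on {0..} F"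
    and "strictly_convex_on {0..} F"
    and "0 \<le> T"
  shows "\<forall>x y a. 0 \<le> x \<longrightarrow> 0 \<le> y \<longrightarrow> 0 \<le> a \<longrightarrow> a \<le> 1 \<longrightarrow>
           value_fn P (observed M Nc) F T (a * x + (1 - a) * y)
             \<le> ennreal a * value_fn P (observed M Nc) F T x
               + ennreal (1 - a) * value_fn P (observed M Nc) F T y"
proof -
  have M: "\<And>t. M t \<in> measurable P (count_space UNIV)"
    and right: "\<And>\<omega> s. 0 \<le> s \<Longrightarrow> \<exists>\<epsilon>>0. \<forall>r\<in>{s..<s+\<epsilon>}. M r \<omega> = M s \<omega>"
    using \<open>ctmc P M Q p0\<close> unfolding ctmc_def by blast+
  have Nc: "\<And>i t. Nc i t \<in> borel_measurable P"
    using assms(8) unfolding compound_poisson_def by blast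
  have "AE \<omega> in P. \<forall>t\<ge>0. piecewise_const (\<lambda>r. Nc i r \<omega>) (jump_times (\<lambda>r. Nc i r \<omega>) \<inter> {0<..t}) t" for i
    using compound_poisson_paths_AE[OF assms(1), of "lam i" "nu i" "Nc i"] assms(6,8) by blast
  then have "AE \<omega> in P. \<forall>i\<in>UNIV. \<forall>t\<ge>0. piecewise_const (\<lambda>r. Nc i r \<omega>) (jump_times (\<lambda>r. Nc i r \<omega>) \<inter> {0<..t}) t"
    by (intro AE_finite_allI) simp_all
  then have paths: "AE \<omega> in P. \<forall>i. piecewise_const (\<lambda>r. Nc i r \<omega>) (jump_times (\<lambda>r. Nc i r \<omega>) \<inter> {0<..t}) t"
    if "0 \<le> t" for t
    by eventually_elim (use that in blast)
  show ?thesis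
  proof (intro allI impI value_fn_convex)
    show "observed M Nc t \<in> borel_measurable (completion P)" if "0 \<le> t" for t
      by (rule observed_borel_measurable[OF M Nc right paths[OF that] that])
    show "AE \<omega> in P. piecewise_const (\<lambda>r. observed M Nc r \<omega>)
        (jump_times (\<lambda>r. observed M Nc r \<omega>) \<inter> {0<..T}) T"
      using paths[OF \<open>0 \<le> T\<close>] by eventually_elim (rule observed_piecewise_const, blast)
    show "mono_on {0..} F" by (rule strict_mono_on_imp_mono_on[OF assms(12)])
    show "convex_on {0..} F" by (rule strictly_convex_on_imp_convex_on[OF assms(13)]) simp
  qed (use assms(11,14) in auto)
qed

end
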